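(* Let $\varepsilon>0$ be such that $1/\varepsilon\ge 3$ is an integer, and let $I$ be an input of offline Ordered Open End Bin Packing with $n$ items. Let $\mathrm{OPT}'$ be a feasible solution for $I$, of cost $\mathrm{opt}'$, in which every exceeding item has size at least $\varepsilon^2$. Then the minimum cost $\mathrm{opt}_{nice}$ of a nice solution for $I$ satisfies $\mathrm{opt}_{nice}\le (1+\varepsilon)\,\mathrm{opt}'+\frac1\varepsilon$ (in particular, a nice solution exists).
   Context: Ordered Open End Bin Packing (offline): items $1,\dots,n$ with sizes in $(0,1]$ are given as a sequence; a feasible solution partitions the items into bins so that in every bin, the total size of all items except the item of maximum index is strictly below $1$. Cost = number of bins. For a bin whose total size is at least $1$, its exceeding item is its item of maximum index; a bin of total size strictly below $1$ has no exceeding item. A feasible solution $S$ has a certificate $(e_0,e_1,\dots,e_{1/\varepsilon})$ if (1) $0=e_0<e_1\le e_2\le\dots\le e_{1/\varepsilon}=n$ and $e_1,\dots,e_{1/\varepsilon-1}$ are integers, and (2) for every bin $B$ of $S$, either the total size of $B$ is strictly below $1$, or there is an integer $i$ such that the exceeding item of $B$ has index strictly larger than $e_i$ and all other items of $B$ have indices at most $e_i$. A feasible solution is nice if every exceeding item of its bins has size at least $\varepsilon^2$ and it has some certificate. $\mathrm{opt}_{nice}$ denotes the minimum cost among nice solutions. *)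

theory Defs
  imports Complex_Main "HOL-Library.Disjoint_Sets"
begin

definition valid_input :: "nat \<Rightarrow> (nat \<Rightarrow> real) \<Rightarrow> bool" where
  "valid_input n s \<longleftrightarrow> (\<forall>i\<in>{1..n}. 0 < s i \<and> s i \<le> 1)"

definition feasible :: "nat \<Rightarrow> (nat \<Rightarrow> real) \<Rightarrow> nat set set \<Rightarrow> bool" where
  "feasible n s P \<longleftrightarrow> partition_on {1..n} P \<and>
     (\<forall>B\<in>P. (\<Sum>i\<in>B - {Max B}. s i) < 1)"

definition cost :: "nat set set \<Rightarrow> nat" where
  "cost P = card P"

definition has_exceeding :: "(nat \<Rightarrow> real) \<Rightarrow> nat set \<Rightarrow> bool" where
  "has_exceeding s B \<longleftrightarrow> (\<Sum>i\<in>B. s i) \<ge> 1"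

definition exceeding_item :: "nat set \<Rightarrow> nat" where
  "exceeding_item B = Max B"

text \<open>Certificate (e_0,...,e_k), k = 1/eps, as a function e on indices 0..k.
  Since e_0 = 0 and e_k = n are integers too, all entries are naturals.\<close>
definition certificate :: "nat \<Rightarrow> (nat \<Rightarrow> real) \<Rightarrow> nat \<Rightarrow> nat set set \<Rightarrow> (nat \<Rightarrow> nat) \<Rightarrow> bool" where
  "certificate n s k P e \<longleftrightarrow>
     e 0 = 0 \<and> 0 < e 1 \<and> (\<forall>i. 1 \<le> i \<and> i < k \<longrightarrow> e i \<le> e (Suc i)) \<and> e k = n \<and>
     (\<forall>B\<in>P. \<not> has_exceeding s B \<or>
        (\<exists>i\<le>k. exceeding_item B > e i \<and> (\<forall>j\<in>B - {exceeding_item B}. j \<le> e i)))"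

definition exceeding_large :: "(nat \<Rightarrow> real) \<Rightarrow> real \<Rightarrow> nat set set \<Rightarrow> bool" where
  "exceeding_large s eps P \<longleftrightarrow>
     (\<forall>B\<in>P. has_exceeding s B \<longrightarrow> s (exceeding_item B) \<ge> eps\<^sup>2)"

definition nice :: "nat \<Rightarrow> (nat \<Rightarrow> real) \<Rightarrow> real \<Rightarrow> nat \<Rightarrow> nat set set \<Rightarrow> bool" where
  "nice n s eps k P \<longleftrightarrow> feasible n s P \<and> exceeding_large s eps P \<and>
     (\<exists>e. certificate n s k P e)"

definition opt_nice :: "nat \<Rightarrow> (nat \<Rightarrow> real) \<Rightarrow> real \<Rightarrow> nat \<Rightarrow> nat" where
  "opt_nice n s eps k = (LEAST m. \<exists>P. nice n s eps k P \<and> cost P = m)"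

end

theory Submission
  imports Defs
begin

(* Let x_0 < ... < x_(m-1) be the exceeding items of OPT' and g = m div k + 1. In the bin whose
   exceeding item is x_i, replace x_i by x_(i+g), or drop it if i + g >= m, and give x_0, ..., x_(g-1)
   bins of their own. The non-maximal items of every bin stay put, so all bins remain feasible, and
   every new exceeding item is some x_j, hence of size at least eps^2. The other items of a bin with
   exceeding item x_(i+g) are at most x_i, so cutting the sequence after x_(g-1), x_(2g-1), ... yields
   a certificate, with at most k cuts because m < k g. Only g <= eps opt' + 1 bins were added. *)

definition exceeding_items :: "(nat \<Rightarrow> real) \<Rightarrow> nat set set \<Rightarrow> nat set" where
  "exceeding_items s P = exceeding_item ` {B \<in> P. has_exceeding s B}"

lemma Max_in_partition:
  assumes "partition_on A P" "finite A" "B \<in> P"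
  shows "Max B \<in> B"
  using assms by (metis Max_in Union_upper partition_onD1 partition_onD3 rev_finite_subset)

lemma exceeding_items_subset:
  assumes "partition_on A P" "finite A"
  shows "exceeding_items s P \<subseteq> A"
  using Max_in_partition[OF assms] partition_onD1[OF assms(1)]
  unfolding exceeding_items_def exceeding_item_def by blast

lemma inter_exceeding_items:
  assumes P: "partition_on A P" "finite A" and B: "B \<in> P"
  shows "B \<inter> exceeding_items s P = (if has_exceeding s B then {Max B} else {})"
proof -
  have "B' = B" if "B' \<in> P" "Max B' \<in> B" for B'
    using disjointD[OF partition_onD2[OF P(1)] B \<open>B' \<in> P\<close>] Max_in_partition[OF P that(1)] that(2)
    by blast
  then show ?thesis
    using B Max_in_partition[OF P B] unfolding exceeding_items_def exceeding_item_def by auto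
qed

lemma card_exceeding_items_le:
  assumes "finite P" shows "card (exceeding_items s P) \<le> card P"
proof -
  have "card (exceeding_items s P) \<le> card {B \<in> P. has_exceeding s B}"
    unfolding exceeding_items_def using assms by (intro card_image_le) simp
  also have "\<dots> \<le> card P" using assms by (intro card_mono) auto
  finally show ?thesis .
qed

definition shift_bin :: "'a list \<Rightarrow> nat \<Rightarrow> 'a set \<Rightarrow> 'a set" where
  "shift_bin xs g B = (B - set xs) \<union> {xs ! (i + g) | i. i + g < length xs \<and> xs ! i \<in> B}"

definition shifted :: "'a list \<Rightarrow> nat \<Rightarrow> 'a set set \<Rightarrow> 'a set set" where
  "shifted xs g P = (shift_bin xs g ` P \<union> (\<lambda>i. {xs ! i}) ` {i. i < g \<and> i < length xs}) - {{}}"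

lemma shifted_cases:
  assumes "C \<in> shifted xs g P"
  obtains B where "B \<in> P" "C = shift_bin xs g B" "C \<noteq> {}"
  | i where "i < g" "i < length xs" "C = {xs ! i}"
  using assms unfolding shifted_def by blast

lemma shift_bin_eq_self: "B \<inter> set xs = {} \<Longrightarrow> shift_bin xs g B = B"
  unfolding shift_bin_def by fastforce

lemma shift_bin_nth:
  assumes "distinct xs" "i < length xs" "B \<inter> set xs = {xs ! i}"
  shows "shift_bin xs g B = (B - {xs ! i}) \<union> (if i + g < length xs then {xs ! (i + g)} else {})"
proof -
  have "xs ! j \<in> B \<longleftrightarrow> j = i" if "j < length xs" for j
  proof -
    have "xs ! j \<in> B \<longleftrightarrow> xs ! j = xs ! i" using assms(3) nth_mem[OF that] by blast
    then show ?thesis using nth_eq_iff_index_eq[OF assms(1) that assms(2)] by simp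
  qed
  then have "{xs ! (j + g) | j. j + g < length xs \<and> xs ! j \<in> B}
      = (if i + g < length xs then {xs ! (i + g)} else {})"
    by auto
  moreover have "B - set xs = B - {xs ! i}" using assms(3) by blast
  ultimately show ?thesis unfolding shift_bin_def by simp
qed

lemma disjnt_shift_bin:
  assumes "distinct xs" "disjnt B1 B2"
  shows "disjnt (shift_bin xs g B1) (shift_bin xs g B2)"
  unfolding disjnt_def
proof (rule equals0I)
  fix y assume "y \<in> shift_bin xs g B1 \<inter> shift_bin xs g B2"
  then have y: "y \<in> shift_bin xs g B1" "y \<in> shift_bin xs g B2" by auto
  show False
  proof (cases "y \<in> set xs")
    case False
    with y assms(2) show False unfolding shift_bin_def disjnt_def by auto
  next
    case True
    from y(1) True obtain i1 where "y = xs ! (i1 + g)" "i1 + g < length xs" "xs ! i1 \<in> B1"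
      unfolding shift_bin_def by blast
    moreover from y(2) True obtain i2 where "y = xs ! (i2 + g)" "i2 + g < length xs" "xs ! i2 \<in> B2"
      unfolding shift_bin_def by blast
    ultimately have "i1 = i2" using assms(1) nth_eq_iff_index_eq by fastforce
    with \<open>xs ! i1 \<in> B1\<close> \<open>xs ! i2 \<in> B2\<close> assms(2) show False unfolding disjnt_def by blast
  qed
qed

lemma nth_notin_shift_bin:
  assumes "distinct xs" "i < g" "i < length xs"
  shows "xs ! i \<notin> shift_bin xs g B"
  using assms nth_eq_iff_index_eq unfolding shift_bin_def by fastforce

lemma Union_shifted:
  assumes P: "\<Union>P = A" and xs: "set xs \<subseteq> A"
  shows "\<Union>(shifted xs g P) = A"
proof
  have "shift_bin xs g B \<subseteq> A" if "B \<in> P" for B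
    using that P xs unfolding shift_bin_def by (auto intro: nth_mem[THEN subsetD[rotated]])
  then show "\<Union>(shifted xs g P) \<subseteq> A"
    using xs unfolding shifted_def by (auto intro: nth_mem[THEN subsetD[rotated]])
  show "A \<subseteq> \<Union>(shifted xs g P)"
  proof
    fix y assume "y \<in> A"
    show "y \<in> \<Union>(shifted xs g P)"
    proof (cases "y \<in> set xs")
      case False
      with \<open>y \<in> A\<close> P obtain B where "B \<in> P" "y \<in> shift_bin xs g B"
        unfolding shift_bin_def by auto
      then show ?thesis unfolding shifted_def by blast
    next
      case True
      then obtain j where j: "j < length xs" "y = xs ! j" by (metis in_set_conv_nth)
      show ?thesis
      proof (cases "j < g")
        case True
        with j show ?thesis unfolding shifted_def by blast
      next
        case False
        with j xs P obtain B where "B \<in> P" "xs ! (j - g) \<in> B"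
          by (metis UnionE diff_le_self le_less_trans nth_mem subsetD)
        with False j have "y \<in> shift_bin xs g B"
          unfolding shift_bin_def by (auto intro!: exI[of _ "j - g"])
        with \<open>B \<in> P\<close> show ?thesis unfolding shifted_def by blast
      qed
    qed
  qed
qed

lemma disjoint_shifted:
  assumes P: "disjoint P" and xs: "distinct xs"
  shows "disjoint (shifted xs g P)"
proof (rule disjointI)
  fix C1 C2 assume C: "C1 \<in> shifted xs g P" "C2 \<in> shifted xs g P" "C1 \<noteq> C2"
  from C(1) show "C1 \<inter> C2 = {}"
  proof (cases rule: shifted_cases)
    case (1 B1)
    from C(2) show ?thesis
    proof (cases rule: shifted_cases)
      case (1 B2)
      with \<open>C1 = shift_bin xs g B1\<close> C(3) have "B1 \<noteq> B2" by auto
      with P \<open>B1 \<in> P\<close> \<open>B2 \<in> P\<close> have "disjnt B1 B2" by (simp add: pairwiseD)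
      then show ?thesis
        using 1 \<open>C1 = shift_bin xs g B1\<close> disjnt_shift_bin[OF xs] unfolding disjnt_def by simp
    next
      case (2 i)
      then show ?thesis using \<open>C1 = shift_bin xs g B1\<close> nth_notin_shift_bin[OF xs] by simp
    qed
  next
    case (2 i)
    from C(2) show ?thesis
    proof (cases rule: shifted_cases)
      case (1 B2)
      then show ?thesis using \<open>C1 = {xs ! i}\<close> 2 nth_notin_shift_bin[OF xs] by simp
    next
      case (2 j)
      then show ?thesis using \<open>C1 = {xs ! i}\<close> C(3) by auto
    qed
  qed
qed

lemma partition_on_shifted:
  assumes "partition_on A P" "distinct xs" "set xs \<subseteq> A"
  shows "partition_on A (shifted xs g P)"
proof -
  have "{} \<notin> shifted xs g P" by (simp add: shifted_def)
  with assms show ?thesis unfolding partition_on_def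
    using Union_shifted[of P A xs g] disjoint_shifted[of P xs g] by simp
qed

lemma card_shifted_le:
  assumes "finite P" shows "card (shifted xs g P) \<le> card P + g"
proof -
  have "card (shifted xs g P) \<le> card (shift_bin xs g ` P \<union> (\<lambda>i. {xs ! i}) ` {i. i < g \<and> i < length xs})"
    unfolding shifted_def using assms by (intro card_mono) auto
  also have "\<dots> \<le> card (shift_bin xs g ` P) + card ((\<lambda>i. {xs ! i}) ` {i. i < g \<and> i < length xs})"
    by (rule card_Un_le)
  also have "\<dots> \<le> card P + card {i. i < g \<and> i < length xs}"
    by (intro add_mono card_image_le assms) simp
  also have "\<dots> \<le> card P + card {..<g}"
    by (intro add_left_mono card_mono) auto
  finally show ?thesis by simp
qed

definition exceeding_gap :: "(nat \<Rightarrow> real) \<Rightarrow> nat list \<Rightarrow> nat \<Rightarrow> nat set \<Rightarrow> bool" where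
  "exceeding_gap s xs g C \<longleftrightarrow> has_exceeding s C \<longrightarrow>
     (\<exists>j<length xs. Max C = xs ! j \<and> (\<forall>y\<in>C - {Max C}. g \<le> j \<and> y \<le> xs ! (j - g)))"

lemma shift_bin_exceeding_moves_up:
  assumes xs: "sorted_wrt (<) xs" and g: "0 < g" and B: "finite B"
    and i: "i + g < length xs" "Max B = xs ! i" "B \<inter> set xs = {xs ! i}"
  shows "Max (shift_bin xs g B) = xs ! (i + g)"
    and "shift_bin xs g B - {Max (shift_bin xs g B)} = B - {Max B}"
proof -
  have le_Max: "y \<le> xs ! i" if "y \<in> B" for y
    using B that i(2) by (metis Max_ge)
  have less: "xs ! i < xs ! (i + g)" using sorted_wrt_nth_less[OF xs _ i(1)] g by simp
  have shift_eq: "shift_bin xs g B = insert (xs ! (i + g)) (B - {xs ! i})"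
    using shift_bin_nth[of xs i B g] xs i by (simp add: strict_sorted_iff)
  show Max_shift: "Max (shift_bin xs g B) = xs ! (i + g)"
    unfolding shift_eq using B le_Max less by (intro Max_eqI) fastforce+
  have "insert (xs ! (i + g)) (B - {xs ! i}) - {xs ! (i + g)} = B - {xs ! i}"
    using le_Max less by fastforce
  then show "shift_bin xs g B - {Max (shift_bin xs g B)} = B - {Max B}"
    using Max_shift shift_eq i(2) by simp
qed

lemma shift_bin_rest_less_and_gap:
  fixes s :: "nat \<Rightarrow> real"
  assumes xs: "sorted_wrt (<) xs" and g: "0 < g" and B: "finite B" "\<forall>y\<in>B. 0 \<le> s y"
    and feasible: "(\<Sum>y\<in>B - {Max B}. s y) < 1"
    and exceeding: "B \<inter> set xs = (if has_exceeding s B then {Max B} else {})"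
  shows "(\<Sum>y\<in>shift_bin xs g B - {Max (shift_bin xs g B)}. s y) < 1
    \<and> exceeding_gap s xs g (shift_bin xs g B)"
proof (cases "has_exceeding s B")
  case False
  with exceeding have "shift_bin xs g B = B" by (simp add: shift_bin_eq_self)
  with False feasible show ?thesis unfolding exceeding_gap_def by simp
next
  case True
  with exceeding obtain i where i: "i < length xs" "Max B = xs ! i"
    by (metis Int_iff in_set_conv_nth insertI1)
  with True exceeding have inter: "B \<inter> set xs = {xs ! i}" by simp
  show ?thesis
  proof (cases "i + g < length xs")
    case False
    then have shift_eq: "shift_bin xs g B = B - {Max B}"
      using shift_bin_nth[of xs i B g] xs i inter by (simp add: strict_sorted_iff)
    have "(\<Sum>y\<in>shift_bin xs g B - {Max (shift_bin xs g B)}. s y) \<le> (\<Sum>y\<in>B - {Max B}. s y)"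
      unfolding shift_eq using B by (intro sum_mono2) auto
    moreover have "\<not> has_exceeding s (shift_bin xs g B)"
      using feasible unfolding shift_eq has_exceeding_def by simp
    ultimately show ?thesis using feasible unfolding exceeding_gap_def by simp
  next
    case True
    have "y \<le> xs ! i" if "y \<in> B" for y
      using B(1) that i(2) by (metis Max_ge)
    then show ?thesis
      using shift_bin_exceeding_moves_up[OF xs g B(1) True i(2) inter] feasible True
      unfolding exceeding_gap_def by auto
  qed
qed

lemma feasible_shifted:
  assumes P: "feasible n s P" and s: "valid_input n s"
    and xs: "sorted_wrt (<) xs" "set xs \<subseteq> {1..n}" and g: "0 < g"
    and exceeding: "\<And>B. B \<in> P \<Longrightarrow> B \<inter> set xs = (if has_exceeding s B then {Max B} else {})"
  shows "feasible n s (shifted xs g P) \<and> (\<forall>C\<in>shifted xs g P. exceeding_gap s xs g C)"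
proof -
  have part: "partition_on {1..n} P" using P unfolding feasible_def by blast
  have bin: "(\<Sum>y\<in>C - {Max C}. s y) < 1 \<and> exceeding_gap s xs g C" if "C \<in> shifted xs g P" for C
    using that
  proof (cases rule: shifted_cases)
    case (1 B)
    have "B \<subseteq> {1..n}" using partition_onD1[OF part] \<open>B \<in> P\<close> by blast
    then have "finite B" "\<forall>y\<in>B. 0 \<le> s y"
      using s unfolding valid_input_def by (auto intro: finite_subset less_imp_le)
    moreover have "(\<Sum>y\<in>B - {Max B}. s y) < 1" using P \<open>B \<in> P\<close> unfolding feasible_def by blast
    ultimately show ?thesis
      using shift_bin_rest_less_and_gap[OF xs(1) g] exceeding[OF \<open>B \<in> P\<close>] \<open>C = shift_bin xs g B\<close>
      by blast
  next
    case (2 i)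
    then show ?thesis unfolding exceeding_gap_def by auto
  qed
  have "partition_on {1..n} (shifted xs g P)"
    using partition_on_shifted[OF part] xs by (simp add: strict_sorted_iff)
  with bin show ?thesis unfolding feasible_def by blast
qed

definition block_bounds :: "nat \<Rightarrow> nat list \<Rightarrow> nat \<Rightarrow> nat \<Rightarrow> nat" where
  "block_bounds n xs g j = (if j = 0 then 0 else if j * g \<le> length xs then xs ! (j * g - 1) else n)"

lemma block_bounds_le:
  assumes "set xs \<subseteq> {..n}" and "0 < g"
  shows "block_bounds n xs g j \<le> n"
proof -
  have "xs ! (j * g - 1) \<le> n" if "j * g \<le> length xs" "j \<noteq> 0"
  proof -
    have "0 < j * g" using that(2) assms(2) by simp
    with that(1) have "xs ! (j * g - 1) \<in> set xs" by (intro nth_mem) linarith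
    with assms(1) show ?thesis by auto
  qed
  then show ?thesis unfolding block_bounds_def by simp
qed

lemma block_bounds_mono:
  assumes xs: "sorted xs" "set xs \<subseteq> {..n}" and g: "0 < g" and ij: "0 < i" "i \<le> j"
  shows "block_bounds n xs g i \<le> block_bounds n xs g j"
proof (cases "j * g \<le> length xs")
  case True
  have "i * g \<le> j * g" "0 < i * g" using g ij by simp_all
  with True have "i * g \<le> length xs" "i * g - 1 \<le> j * g - 1" "j * g - 1 < length xs"
    by linarith+
  moreover have "i \<noteq> 0" "j \<noteq> 0" using ij by simp_all
  ultimately show ?thesis
    using True sorted_nth_mono[OF xs(1), of "i * g - 1" "j * g - 1"]
    unfolding block_bounds_def by simp
next
  case False
  then have "block_bounds n xs g j = n" using ij unfolding block_bounds_def by simp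
  then show ?thesis using block_bounds_le[OF xs(2) g] by simp
qed

lemma next_multiple_bounds:
  fixes i g :: nat
  assumes "0 < g"
  shows "i < (i div g + 1) * g" "(i div g + 1) * g \<le> i + g"
  using dividend_less_div_times[OF assms, of i] div_times_less_eq_dividend[of i g] by simp_all

lemma exceeding_gap_block_bound:
  assumes xs: "sorted_wrt (<) xs" "set xs \<subseteq> {1..n}" and g: "0 < g"
    and len: "length xs < k * g"
    and gap: "exceeding_gap s xs g C" and C: "has_exceeding s C"
  shows "\<exists>b\<le>k. block_bounds n xs g b < Max C \<and> (\<forall>y\<in>C - {Max C}. y \<le> block_bounds n xs g b)"
proof -
  obtain j where j: "j < length xs" "Max C = xs ! j"
    and rest: "\<forall>y\<in>C - {Max C}. g \<le> j \<and> y \<le> xs ! (j - g)"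
    using gap C unfolding exceeding_gap_def by blast
  show ?thesis
  proof (cases "C - {Max C} = {}")
    case True
    have "0 < xs ! j" using xs(2) nth_mem[OF j(1)] by fastforce
    with True j(2) show ?thesis unfolding block_bounds_def by (intro exI[of _ 0]) auto
  next
    case False
    then have "g \<le> j" using rest by blast
    define b where "b = (j - g) div g + 1"
    have b: "j - g \<le> b * g - 1" "b * g - 1 < j" "b * g \<le> length xs"
      using next_multiple_bounds[OF g, of "j - g"] \<open>g \<le> j\<close> j(1) unfolding b_def by linarith+
    have "b * g < k * g" using b(3) len by linarith
    then have "b \<le> k" by simp
    have "b \<noteq> 0" unfolding b_def by simp
    with b(3) have bound: "block_bounds n xs g b = xs ! (b * g - 1)"
      unfolding block_bounds_def by simp
    have "\<forall>y\<in>C - {Max C}. y \<le> xs ! (b * g - 1)"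
      using rest sorted_nth_mono[of xs "j - g" "b * g - 1"] xs(1) b j(1)
      by (auto simp: strict_sorted_iff intro: order_trans)
    moreover have "xs ! (b * g - 1) < Max C"
      using sorted_wrt_nth_less[OF xs(1) b(2) j(1)] j(2) by simp
    ultimately show ?thesis using \<open>b \<le> k\<close> bound by (intro exI[of _ b]) simp
  qed
qed

lemma certificate_block_bounds:
  assumes xs: "sorted_wrt (<) xs" "set xs \<subseteq> {1..n}" and n: "1 \<le> n" and g: "0 < g"
    and len: "length xs < k * g"
    and gap: "\<forall>C\<in>Q. exceeding_gap s xs g C"
  shows "certificate n s k Q (block_bounds n xs g)"
proof -
  have "0 < k" using len by (cases k) auto
  have "0 < block_bounds n xs g 1"
  proof (cases "g \<le> length xs")
    case True
    then have "xs ! (g - 1) \<in> set xs" using g by (intro nth_mem) linarith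
    with xs(2) show ?thesis unfolding block_bounds_def by auto
  qed (use n in \<open>simp add: block_bounds_def\<close>)
  moreover have "block_bounds n xs g k = n" using len \<open>0 < k\<close> unfolding block_bounds_def by simp
  moreover have "block_bounds n xs g i \<le> block_bounds n xs g (Suc i)" if "1 \<le> i" for i
    using xs g that by (intro block_bounds_mono) (auto simp: strict_sorted_iff)
  moreover have "\<exists>b\<le>k. block_bounds n xs g b < Max C \<and> (\<forall>y\<in>C - {Max C}. y \<le> block_bounds n xs g b)"
    if "C \<in> Q" "has_exceeding s C" for C
    using exceeding_gap_block_bound[OF xs g len] gap that by blast
  ultimately show ?thesis
    unfolding certificate_def exceeding_item_def block_bounds_def[of n xs g 0] by simp
qed

lemma nice_shifted:
  assumes s: "valid_input n s" and P: "feasible n s P" "exceeding_large s eps P" and n: "1 \<le> n"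
    and xs: "xs = sorted_list_of_set (exceeding_items s P)"
    and g: "0 < g" "length xs < k * g"
  shows "nice n s eps k (shifted xs g P)"
proof -
  have part: "partition_on {1..n} P" using P(1) unfolding feasible_def by blast
  have fin: "finite P" using finite_elements[OF _ part] by simp
  then have set_xs: "set xs = exceeding_items s P" using xs by (simp add: exceeding_items_def)
  have sorted_xs: "sorted_wrt (<) xs" using xs by simp
  have subset: "set xs \<subseteq> {1..n}" using exceeding_items_subset[OF part] set_xs by simp
  have "feasible n s (shifted xs g P) \<and> (\<forall>C\<in>shifted xs g P. exceeding_gap s xs g C)"
    using feasible_shifted[OF P(1) s sorted_xs subset g(1)] inter_exceeding_items[OF part] set_xs
    by simp
  then have feasible: "feasible n s (shifted xs g P)"
    and gap: "\<forall>C\<in>shifted xs g P. exceeding_gap s xs g C" by blast+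
  have "eps\<^sup>2 \<le> s y" if "y \<in> set xs" for y
    using P(2) that unfolding set_xs exceeding_items_def exceeding_large_def by auto
  with gap have "exceeding_large s eps (shifted xs g P)"
    unfolding exceeding_large_def exceeding_gap_def exceeding_item_def by (metis nth_mem)
  with feasible certificate_block_bounds[OF sorted_xs subset n g gap] show ?thesis
    unfolding nice_def by blast
qed

theorem mainTheorem3:
  fixes eps :: real and k n :: nat and s :: "nat \<Rightarrow> real" and OPT' :: "nat set set"
  assumes "eps > 0" and "1 / eps = real k" and "k \<ge> 3"
    and "n \<ge> 1"
    and "valid_input n s"
    and "feasible n s OPT'"
    and "exceeding_large s eps OPT'"
  shows "(\<exists>P. nice n s eps k P) \<and>
         real (opt_nice n s eps k) \<le> (1 + eps) * real (cost OPT') + 1 / eps"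
proof -
  define xs where "xs = sorted_list_of_set (exceeding_items s OPT')"
  define g where "g = length xs div k + 1"
  have fin: "finite OPT'"
    using assms(6) finite_elements[of "{1..n}"] unfolding feasible_def by simp
  have "length xs < k * g" using dividend_less_times_div[of k] assms(3) unfolding g_def by simp
  then have nice: "nice n s eps k (shifted xs g OPT')"
    using nice_shifted[OF assms(5-7,4) xs_def] unfolding g_def by simp
  then have "opt_nice n s eps k \<le> card (shifted xs g OPT')"
    unfolding opt_nice_def cost_def by (intro Least_le) blast
  also have "\<dots> \<le> card OPT' + length xs div k + 1"
    using card_shifted_le[OF fin, of xs g] unfolding g_def by simp
  finally have opt: "opt_nice n s eps k \<le> card OPT' + length xs div k + 1" .
  have eps: "eps = 1 / real k" using assms(1-3) by (simp add: field_simps)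
  have "real (length xs div k) \<le> real (length xs) / real k" by (rule of_nat_div_le_of_nat)
  also have "\<dots> = eps * real (length xs)" unfolding eps by simp
  also have "\<dots> \<le> eps * real (card OPT')"
    using card_exceeding_items_le[OF fin] assms(1) unfolding xs_def by simp
  finally have "real (length xs div k) \<le> eps * real (card OPT')" .
  moreover have "1 \<le> 1 / eps" using assms(2,3) by simp
  ultimately show ?thesis using nice opt unfolding cost_def by (auto simp: algebra_simps)
qed

end
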